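(* Under the standing setting and assumptions (A1)–(A3) described in the context, assume $\mathcal A$ is star-shaped and $\mathcal A\cap\ker(\pi)=\{0\}$ (absence of good deals). Then $\mathcal R(X)\neq\emptyset$ for every $X\in\mathcal X$.
   Context: Let $\mathcal X$ be a Hausdorff, first countable, locally convex topological vector space over $\mathbb R$, partially ordered by a partial order $\geq$ with positive cone $\mathcal X_+=\{X\in\mathcal X: X\geq 0\}$. Let $\mathcal M\subset\mathcal X$ be a vector subspace with $1<\dim\mathcal M<\infty$, carrying the relative topology, and let $\pi:\mathcal M\to\mathbb R$ be linear with $\ker(\pi)=\{Z\in\mathcal M:\pi(Z)=0\}$. Standing assumptions: (A1) there is $U\in\mathcal M\cap\mathcal X_+$ with $\pi(U)=1$; (A2) $\mathcal A\subsetneq\mathcal X$ is closed, contains $0$, and satisfies $\mathcal A+\mathcal X_+\subset\mathcal A$; (A3) the map $\rho(X)=\inf\{\pi(Z): Z\in\mathcal M,\ X+Z\in\mathcal A\}$ is finitely valued and continuous on $\mathcal X$. The optimal payoff map is $\mathcal R(X)=\{Z\in\mathcal M: X+Z\in\mathcal A,\ \pi(Z)=\rho(X)\}$. $\mathcal A$ is star-shaped if $X\in\mathcal A$ implies $\lambda X\in\mathcal A$ for all $\lambda\in[0,1]$. *)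

theory Defs
  imports "HOL-Analysis.Analysis"
begin

definition tvs :: "'a::{real_vector,topological_space} itself \<Rightarrow> bool" where
  "tvs _ \<longleftrightarrow> continuous_on UNIV (\<lambda>(x::'a, y::'a). x + y)
            \<and> continuous_on UNIV (\<lambda>(c::real, x::'a). c *\<^sub>R x)"

definition locally_convex :: "'a::{real_vector,topological_space} itself \<Rightarrow> bool" where
  "locally_convex _ \<longleftrightarrow> (\<forall>W::'a set. open W \<and> 0 \<in> W \<longrightarrow>
       (\<exists>V. open V \<and> convex V \<and> 0 \<in> V \<and> V \<subseteq> W))"

definition ordered_vs :: "('a::real_vector \<Rightarrow> 'a \<Rightarrow> bool) \<Rightarrow> bool" where
  "ordered_vs le \<longleftrightarrow> (\<forall>x. le x x) \<and> (\<forall>x y. le x y \<and> le y x \<longrightarrow> x = y)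
     \<and> (\<forall>x y z. le x y \<and> le y z \<longrightarrow> le x z)
     \<and> (\<forall>x y z. le x y \<longrightarrow> le (x + z) (y + z))
     \<and> (\<forall>x y (c::real). le x y \<and> 0 \<le> c \<longrightarrow> le (c *\<^sub>R x) (c *\<^sub>R y))"

definition pos_cone :: "('a::real_vector \<Rightarrow> 'a \<Rightarrow> bool) \<Rightarrow> 'a set" where
  "pos_cone le = {X. le 0 X}"

definition linear_on :: "'a::real_vector set \<Rightarrow> ('a \<Rightarrow> real) \<Rightarrow> bool" where
  "linear_on M \<pi> \<longleftrightarrow> (\<forall>x\<in>M. \<forall>y\<in>M. \<pi> (x + y) = \<pi> x + \<pi> y)
                    \<and> (\<forall>x\<in>M. \<forall>c. \<pi> (c *\<^sub>R x) = c * \<pi> x)"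

definition kerM :: "'a::real_vector set \<Rightarrow> ('a \<Rightarrow> real) \<Rightarrow> 'a set" where
  "kerM M \<pi> = {Z \<in> M. \<pi> Z = 0}"

definition prices :: "'a::real_vector set \<Rightarrow> ('a \<Rightarrow> real) \<Rightarrow> 'a set \<Rightarrow> 'a \<Rightarrow> real set" where
  "prices M \<pi> A X = {\<pi> Z | Z. Z \<in> M \<and> X + Z \<in> A}"

definition rho :: "'a::real_vector set \<Rightarrow> ('a \<Rightarrow> real) \<Rightarrow> 'a set \<Rightarrow> 'a \<Rightarrow> real" where
  "rho M \<pi> A X = Inf (prices M \<pi> A X)"

definition optR :: "'a::real_vector set \<Rightarrow> ('a \<Rightarrow> real) \<Rightarrow> 'a set \<Rightarrow> 'a \<Rightarrow> 'a set" where
  "optR M \<pi> A X = {Z \<in> M. X + Z \<in> A \<and> \<pi> Z = rho M \<pi> A X}"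

definition star_shaped :: "'a::real_vector set \<Rightarrow> bool" where
  "star_shaped A \<longleftrightarrow> (\<forall>X\<in>A. \<forall>t::real. 0 \<le> t \<and> t \<le> 1 \<longrightarrow> t *\<^sub>R X \<in> A)"

end

theory Submission imports Defs begin

text \<open>
  Fix a finite basis \<open>C\<close> of \<open>\<M>\<close> and work with coefficient vectors. Along a
  minimising sequence of admissible payoffs the prices stay bounded, and the coefficients stay
  bounded too: otherwise, rescaling by the \<open>\<ell>\<^sup>1\<close>-norm of the coefficients (which
  keeps the translate of \<open>X\<close> inside the star-shaped set \<open>\<A>\<close>) produces in the limit a
  nonzero payoff in \<open>\<A> \<inter> ker \<pi>\<close>, i.e. a good deal. Bounded coefficients have a convergent
  subsequence, and since \<open>\<A>\<close> is closed its limit is an optimal payoff.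
\<close>

lemma tendsto_add_tvs:
  fixes f g :: "'b \<Rightarrow> 'a::{real_vector,topological_space}"
  assumes tvs: "tvs TYPE('a)" and f: "(f \<longlongrightarrow> a) F" and g: "(g \<longlongrightarrow> b) F"
  shows "((\<lambda>x. f x + g x) \<longlongrightarrow> a + b) F"
proof -
  have "continuous_on UNIV (\<lambda>(x::'a, y::'a). x + y)"
    using tvs by (simp add: tvs_def)
  from continuous_on_tendsto_compose[OF this tendsto_Pair[OF f g]] show ?thesis by simp
qed

lemma tendsto_scaleR_tvs:
  fixes f :: "'b \<Rightarrow> 'a::{real_vector,topological_space}" and c :: "'b \<Rightarrow> real"
  assumes tvs: "tvs TYPE('a)" and c: "(c \<longlongrightarrow> d) F" and f: "(f \<longlongrightarrow> a) F"
  shows "((\<lambda>x. c x *\<^sub>R f x) \<longlongrightarrow> d *\<^sub>R a) F"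
proof -
  have "continuous_on UNIV (\<lambda>(c::real, x::'a). c *\<^sub>R x)"
    using tvs by (simp add: tvs_def)
  from continuous_on_tendsto_compose[OF this tendsto_Pair[OF c f]] show ?thesis by simp
qed

lemma tendsto_lincomb_tvs:
  fixes C :: "'a::{real_vector,topological_space} set"
  assumes tvs: "tvs TYPE('a)" and "finite C"
    and "\<And>b. b \<in> C \<Longrightarrow> ((\<lambda>x. u x b) \<longlongrightarrow> w b) F"
  shows "((\<lambda>x. \<Sum>b\<in>C. u x b *\<^sub>R b) \<longlongrightarrow> (\<Sum>b\<in>C. w b *\<^sub>R b)) F"
  using assms(2,3)
proof (induction C rule: finite_induct)
  case empty
  then show ?case by simp
next
  case (insert c C)
  have "((\<lambda>x. u x c *\<^sub>R c) \<longlongrightarrow> w c *\<^sub>R c) F"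
    using insert.prems by (intro tendsto_scaleR_tvs[OF tvs]) auto
  from tendsto_add_tvs[OF tvs this insert.IH] insert.hyps insert.prems show ?case by simp
qed

lemma linear_on_sum:
  assumes M: "subspace M" and lin: "linear_on M \<pi>" and "finite C" "C \<subseteq> M"
  shows "\<pi> (\<Sum>b\<in>C. u b *\<^sub>R b) = (\<Sum>b\<in>C. u b * \<pi> b)"
  using assms(3,4)
proof (induction C rule: finite_induct)
  case empty
  have "\<pi> 0 = \<pi> (0 *\<^sub>R 0)" by simp
  also have "\<dots> = 0" using lin M subspace_0 unfolding linear_on_def by fastforce
  finally show ?case by simp
next
  case (insert c C)
  have "u c *\<^sub>R c \<in> M" "(\<Sum>b\<in>C. u b *\<^sub>R b) \<in> M"
    using insert.prems M by (auto intro: subspace_scale subspace_sum)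
  with insert lin show ?case unfolding linear_on_def by simp
qed

lemma bounded_coordinates_convergent_subseq:
  fixes f :: "nat \<Rightarrow> 'i \<Rightarrow> real"
  assumes "finite I" and "\<And>i n. i \<in> I \<Longrightarrow> \<bar>f n i\<bar> \<le> K"
  shows "\<exists>r w. strict_mono r \<and> (\<forall>i\<in>I. (\<lambda>n. f (r n) i) \<longlonglongrightarrow> w i)"
  using assms
proof (induction I rule: finite_induct)
  case empty
  show ?case by (rule exI[of _ id]) (auto simp: strict_mono_def)
next
  case (insert j I)
  then obtain r w where r: "strict_mono r" and w: "\<forall>i\<in>I. (\<lambda>n. f (r n) i) \<longlonglongrightarrow> w i"
    by auto
  have "bounded (range (\<lambda>n. f (r n) j))"
    unfolding bounded_real using insert.prems by auto
  then obtain l s where s: "strict_mono s" and l: "((\<lambda>n. f (r n) j) \<circ> s) \<longlonglongrightarrow> l"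
    using bounded_imp_convergent_subsequence by blast
  have "(\<lambda>n. f ((r \<circ> s) n) i) \<longlonglongrightarrow> (w(j := l)) i" if "i \<in> insert j I" for i
  proof (cases "i = j")
    case True
    then show ?thesis using l by (simp add: o_def)
  next
    case False
    then show ?thesis
      using that LIMSEQ_subseq_LIMSEQ[OF w[rule_format] s] by (simp add: o_def)
  qed
  then show ?case using strict_mono_o[OF r s] by blast
qed

lemma span_finite_independent_basis:
  fixes B :: "'a::real_vector set"
  assumes "finite B"
  obtains C where "finite C" "independent C" "span C = span B"
proof -
  obtain C where C: "C \<subseteq> B" "independent C" "B \<subseteq> span C"
    using maximal_independent_subset[of B] by blast
  have "span C = span B"
    using C span_mono span_span by (metis subset_antisym)
  with C assms show ?thesis using finite_subset that by blast
qed

lemma star_shaped_rescale_lincomb: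
  assumes "star_shaped A" and "X + (\<Sum>b\<in>C. u b *\<^sub>R b) \<in> A" and "1 \<le> N"
  shows "(1 / N) *\<^sub>R X + (\<Sum>b\<in>C. (u b / N) *\<^sub>R b) \<in> A"
proof -
  have "(1 / N) *\<^sub>R (X + (\<Sum>b\<in>C. u b *\<^sub>R b)) \<in> A"
    using assms unfolding star_shaped_def by auto
  then show ?thesis
    by (simp add: scaleR_right_distrib scaleR_sum_right)
qed

lemma admissible_recession_direction:
  fixes A :: "'a::{real_vector,topological_space} set"
  assumes tvs: "tvs TYPE('a)" and "closed A" and "star_shaped A" and C: "finite C"
    and adm: "\<And>n. X + (\<Sum>b\<in>C. u n b *\<^sub>R b) \<in> A"
    and price: "\<And>n. \<bar>\<Sum>b\<in>C. u n b * p b\<bar> \<le> K"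
    and N: "\<And>n. 1 \<le> N n" "filterlim N at_top sequentially"
    and w: "\<And>b. b \<in> C \<Longrightarrow> (\<lambda>n. u n b / N n) \<longlonglongrightarrow> w b"
  shows "(\<Sum>b\<in>C. w b *\<^sub>R b) \<in> A" and "(\<Sum>b\<in>C. w b * p b) = 0"
proof -
  have inv_N: "(\<lambda>n. 1 / N n) \<longlonglongrightarrow> 0"
    using tendsto_inverse_0_at_top[OF N(2)] by (simp add: divide_inverse)
  have rescaled_adm: "(1 / N n) *\<^sub>R X + (\<Sum>b\<in>C. (u n b / N n) *\<^sub>R b) \<in> A" for n
    using star_shaped_rescale_lincomb[OF \<open>star_shaped A\<close> adm[of n] N(1)[of n]] .
  have "(\<lambda>n. (1 / N n) *\<^sub>R X + (\<Sum>b\<in>C. (u n b / N n) *\<^sub>R b))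
          \<longlonglongrightarrow> 0 *\<^sub>R X + (\<Sum>b\<in>C. w b *\<^sub>R b)"
    by (intro tendsto_add_tvs[OF tvs] tendsto_scaleR_tvs[OF tvs] tendsto_lincomb_tvs[OF tvs C]
        inv_N tendsto_const w)
  then show "(\<Sum>b\<in>C. w b *\<^sub>R b) \<in> A"
    using closed_sequentially[OF \<open>closed A\<close> rescaled_adm] by simp
  have "(\<lambda>n. \<Sum>b\<in>C. u n b / N n * p b) \<longlonglongrightarrow> (\<Sum>b\<in>C. w b * p b)"
    by (intro tendsto_intros w)
  moreover have "(\<lambda>n. \<Sum>b\<in>C. u n b / N n * p b) \<longlonglongrightarrow> 0"
  proof (rule tendsto_0_le[OF inv_N, where K = K], intro always_eventually allI)
    fix n
    have "(\<Sum>b\<in>C. u n b / N n * p b) = (\<Sum>b\<in>C. u n b * p b) / N n"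
      by (simp add: sum_divide_distrib)
    then show "norm (\<Sum>b\<in>C. u n b / N n * p b) \<le> norm (1 / N n) * K"
      using price[of n] N(1)[of n] by (simp add: abs_divide divide_right_mono)
  qed
  ultimately show "(\<Sum>b\<in>C. w b * p b) = 0"
    using LIMSEQ_unique by blast
qed

lemma admissible_coefficients_bounded:
  fixes A :: "'a::{real_vector,topological_space} set"
  assumes tvs: "tvs TYPE('a)" and "closed A" and "star_shaped A"
    and C: "finite C" "independent C"
    and no_good_deal: "\<And>u. (\<Sum>b\<in>C. u b *\<^sub>R b) \<in> A \<Longrightarrow> (\<Sum>b\<in>C. u b * p b) = 0 \<Longrightarrow>
                         (\<Sum>b\<in>C. u b *\<^sub>R b) = 0"
  shows "\<exists>K. \<forall>u. X + (\<Sum>b\<in>C. u b *\<^sub>R b) \<in> A \<and> \<bar>\<Sum>b\<in>C. u b * p b\<bar> \<le> K0 \<longrightarrow>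
               (\<Sum>b\<in>C. \<bar>u b\<bar>) \<le> K"
proof (rule ccontr)
  assume "\<not> ?thesis"
  then have "\<forall>j::nat. \<exists>u. (X + (\<Sum>b\<in>C. u b *\<^sub>R b) \<in> A \<and> \<bar>\<Sum>b\<in>C. u b * p b\<bar> \<le> K0) \<and>
                           real j + 1 < (\<Sum>b\<in>C. \<bar>u b\<bar>)"
    by (meson not_le)
  then obtain u where adm: "\<And>j. X + (\<Sum>b\<in>C. u j b *\<^sub>R b) \<in> A"
    and price: "\<And>j. \<bar>\<Sum>b\<in>C. u j b * p b\<bar> \<le> K0"
    and large: "\<And>j. real j + 1 < (\<Sum>b\<in>C. \<bar>u j b\<bar>)"
    by metis
  define N where "N j = (\<Sum>b\<in>C. \<bar>u j b\<bar>)" for j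
  have N_ge: "1 \<le> N j" for j
    using large[of j] unfolding N_def by linarith
  have "\<bar>u j b / N j\<bar> \<le> 1" if "b \<in> C" for j b
    using member_le_sum[OF that, of "\<lambda>b. \<bar>u j b\<bar>"] C(1) N_ge[of j]
    by (simp add: N_def abs_divide divide_le_eq)
  then obtain r w where r: "strict_mono r"
    and w: "\<forall>b\<in>C. (\<lambda>n. u (r n) b / N (r n)) \<longlonglongrightarrow> w b"
    using bounded_coordinates_convergent_subseq[OF C(1), of "\<lambda>j b. u j b / N j"] by blast
  have "filterlim (\<lambda>n. N (r n)) at_top sequentially"
  proof (rule filterlim_at_top_mono[OF filterlim_real_sequentially], intro always_eventually allI)
    show "real n \<le> N (r n)" for n
      using seq_suble[OF r, of n] large[of "r n"] unfolding N_def by linarith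
  qed
  then have "(\<Sum>b\<in>C. w b *\<^sub>R b) \<in> A" "(\<Sum>b\<in>C. w b * p b) = 0"
    using admissible_recession_direction[OF tvs \<open>closed A\<close> \<open>star_shaped A\<close> C(1),
        of X "\<lambda>n. u (r n)" p K0 "\<lambda>n. N (r n)" w] adm price N_ge w by auto
  then have "(\<Sum>b\<in>C. w b *\<^sub>R b) = 0"
    by (rule no_good_deal)
  then have "\<forall>b\<in>C. w b = 0"
    using C dependent_finite by blast
  moreover have "(\<Sum>b\<in>C. \<bar>w b\<bar>) = 1"
  proof (rule LIMSEQ_unique)
    show "(\<lambda>n. \<Sum>b\<in>C. \<bar>u (r n) b / N (r n)\<bar>) \<longlonglongrightarrow> (\<Sum>b\<in>C. \<bar>w b\<bar>)"
      using w by (intro tendsto_intros) auto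
    have "(\<Sum>b\<in>C. \<bar>u j b / N j\<bar>) = 1" for j
      using N_ge[of j] by (simp add: abs_divide N_def flip: sum_divide_distrib)
    then show "(\<lambda>n. \<Sum>b\<in>C. \<bar>u (r n) b / N (r n)\<bar>) \<longlonglongrightarrow> 1"
      by simp
  qed
  ultimately show False by simp
qed

lemma coefficient_prices_Inf_attained:
  fixes A :: "'a::{real_vector,topological_space} set"
  assumes tvs: "tvs TYPE('a)" and "closed A" and "star_shaped A"
    and C: "finite C" "independent C"
    and no_good_deal: "\<And>u. (\<Sum>b\<in>C. u b *\<^sub>R b) \<in> A \<Longrightarrow> (\<Sum>b\<in>C. u b * p b) = 0 \<Longrightarrow>
                         (\<Sum>b\<in>C. u b *\<^sub>R b) = 0"
    and S_def: "S = {\<Sum>b\<in>C. u b * p b | u. X + (\<Sum>b\<in>C. u b *\<^sub>R b) \<in> A}"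
    and "S \<noteq> {}" and "bdd_below S"
  shows "Inf S \<in> S"
proof -
  have "\<forall>n::nat. \<exists>u. X + (\<Sum>b\<in>C. u b *\<^sub>R b) \<in> A \<and>
                     (\<Sum>b\<in>C. u b * p b) < Inf S + 1 / real (Suc n)"
    using cInf_lessD[OF \<open>S \<noteq> {}\<close>, of "Inf S + 1 / real (Suc _)"] unfolding S_def by auto
  then obtain u where adm: "\<And>n. X + (\<Sum>b\<in>C. u n b *\<^sub>R b) \<in> A"
    and upper: "\<And>n. (\<Sum>b\<in>C. u n b * p b) < Inf S + 1 / real (Suc n)"
    by metis
  have lower: "Inf S \<le> (\<Sum>b\<in>C. u n b * p b)" for n
    using cInf_lower[OF _ \<open>bdd_below S\<close>] adm unfolding S_def by blast
  have "1 / real (Suc n) \<le> 1" for n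
    by simp
  then have "\<bar>\<Sum>b\<in>C. u n b * p b\<bar> \<le> \<bar>Inf S\<bar> + 1" for n
    using lower[of n] upper[of n] by (smt (verit))
  moreover obtain K where "\<And>u. X + (\<Sum>b\<in>C. u b *\<^sub>R b) \<in> A \<Longrightarrow>
      \<bar>\<Sum>b\<in>C. u b * p b\<bar> \<le> \<bar>Inf S\<bar> + 1 \<Longrightarrow> (\<Sum>b\<in>C. \<bar>u b\<bar>) \<le> K"
    using admissible_coefficients_bounded[OF tvs \<open>closed A\<close> \<open>star_shaped A\<close> C no_good_deal]
    by blast
  ultimately have "(\<Sum>b\<in>C. \<bar>u n b\<bar>) \<le> K" for n
    using adm by blast
  then have "\<bar>u n b\<bar> \<le> K" if "b \<in> C" for n b
    using member_le_sum[OF that, of "\<lambda>b. \<bar>u n b\<bar>"] C(1) by (meson abs_ge_zero order_trans)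
  then obtain r w where r: "strict_mono r" and w: "\<forall>b\<in>C. (\<lambda>n. u (r n) b) \<longlonglongrightarrow> w b"
    using bounded_coordinates_convergent_subseq[OF C(1)] by blast
  have "(\<lambda>n. X + (\<Sum>b\<in>C. u (r n) b *\<^sub>R b)) \<longlonglongrightarrow> X + (\<Sum>b\<in>C. w b *\<^sub>R b)"
    using w by (intro tendsto_add_tvs[OF tvs] tendsto_lincomb_tvs[OF tvs C(1)]) auto
  then have w_adm: "X + (\<Sum>b\<in>C. w b *\<^sub>R b) \<in> A"
    by (rule closed_sequentially[OF \<open>closed A\<close> adm])
  have "(\<lambda>n. \<Sum>b\<in>C. u n b * p b) \<longlonglongrightarrow> Inf S"
  proof (rule tendsto_sandwich[of "\<lambda>_. Inf S" _ _ "\<lambda>n. Inf S + 1 / real (Suc n)"])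
    show "(\<lambda>n. Inf S + 1 / real (Suc n)) \<longlonglongrightarrow> Inf S"
      using tendsto_add[OF tendsto_const LIMSEQ_inverse_real_of_nat] by (simp add: divide_inverse)
    show "\<forall>\<^sub>F n in sequentially. (\<Sum>b\<in>C. u n b * p b) \<le> Inf S + 1 / real (Suc n)"
      using upper by (intro always_eventually allI less_imp_le)
  qed (use lower in auto)
  then have "(\<lambda>n. \<Sum>b\<in>C. u (r n) b * p b) \<longlonglongrightarrow> Inf S"
    using LIMSEQ_subseq_LIMSEQ[OF _ r] by (simp add: o_def)
  moreover have "(\<lambda>n. \<Sum>b\<in>C. u (r n) b * p b) \<longlonglongrightarrow> (\<Sum>b\<in>C. w b * p b)"
    using w by (intro tendsto_intros) auto
  ultimately have "(\<Sum>b\<in>C. w b * p b) = Inf S"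
    using LIMSEQ_unique by blast
  with w_adm show ?thesis
    unfolding S_def by (metis (mono_tags, lifting) mem_Collect_eq)
qed

lemma prices_eq_coefficient_prices:
  assumes "subspace M" "linear_on M \<pi>" "finite C" "span C = M"
  shows "prices M \<pi> A X = {\<Sum>b\<in>C. u b * \<pi> b | u. X + (\<Sum>b\<in>C. u b *\<^sub>R b) \<in> A}"
proof -
  have M_eq: "M = range (\<lambda>u. \<Sum>b\<in>C. u b *\<^sub>R b)"
    using assms(3,4) span_finite by auto
  have "C \<subseteq> M"
    using assms(4) span_superset by blast
  then have \<pi>_eq: "\<pi> (\<Sum>b\<in>C. u b *\<^sub>R b) = (\<Sum>b\<in>C. u b * \<pi> b)" for u
    using linear_on_sum assms(1-3) by blast
  have "prices M \<pi> A X = (\<lambda>u. \<pi> (\<Sum>b\<in>C. u b *\<^sub>R b)) ` {u. X + (\<Sum>b\<in>C. u b *\<^sub>R b) \<in> A}"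
    unfolding prices_def M_eq by auto
  then show ?thesis
    unfolding \<pi>_eq by auto
qed

text \<open>
  Only closedness and star-shapedness of \<open>\<A>\<close>, the absence of good deals, finite dimensionality
  of \<open>\<M>\<close> and finiteness of \<open>\<rho>\<close> are used.
\<close>
theorem mainTheorem9:
  fixes le :: "'a::{real_vector,t2_space,first_countable_topology} \<Rightarrow> 'a \<Rightarrow> bool"
    and M A :: "'a set" and \<pi> :: "'a \<Rightarrow> real"
  assumes tvs: "tvs TYPE('a)" and lc: "locally_convex TYPE('a)"
    and ord: "ordered_vs le"
    and M_sub: "subspace M" and M_fin: "\<exists>B. finite B \<and> M = span B" and M_dim: "1 < dim M"
    and \<pi>_lin: "linear_on M \<pi>"
    and A1: "\<exists>U\<in>M \<inter> pos_cone le. \<pi> U = 1"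
    and A2: "closed A" "A \<noteq> UNIV" "0 \<in> A" "\<forall>X\<in>A. \<forall>P\<in>pos_cone le. X + P \<in> A"
    and A3: "\<forall>X. prices M \<pi> A X \<noteq> {} \<and> bdd_below (prices M \<pi> A X)"
            "continuous_on UNIV (rho M \<pi> A)"
    and star: "star_shaped A"
    and nogood: "A \<inter> kerM M \<pi> = {0}"
  shows "\<forall>X. optR M \<pi> A X \<noteq> {}"
proof
  fix X
  obtain C where C: "finite C" "independent C" "span C = M"
    using M_fin span_finite_independent_basis by metis
  have "(\<Sum>b\<in>C. u b *\<^sub>R b) \<in> M" for u
    using C(3) by (auto intro: span_sum span_scale span_base)
  moreover have "\<pi> (\<Sum>b\<in>C. u b *\<^sub>R b) = (\<Sum>b\<in>C. u b * \<pi> b)" for u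
    using linear_on_sum[OF M_sub \<pi>_lin C(1)] C(3) span_superset by blast
  ultimately have no_good_deal: "(\<Sum>b\<in>C. u b *\<^sub>R b) = 0"
    if "(\<Sum>b\<in>C. u b *\<^sub>R b) \<in> A" "(\<Sum>b\<in>C. u b * \<pi> b) = 0" for u
    using nogood that unfolding kerM_def by auto
  have "rho M \<pi> A X \<in> prices M \<pi> A X"
    unfolding rho_def
    by (rule coefficient_prices_Inf_attained[OF tvs A2(1) star C(1,2) no_good_deal])
      (use A3(1) prices_eq_coefficient_prices[OF M_sub \<pi>_lin C(1,3)] in auto)
  then show "optR M \<pi> A X \<noteq> {}"
    unfolding prices_def optR_def by auto
qed

end
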